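(* Let $w$ be a non-empty finite LSP word. Then there exists a letter $a$ occurring in $w$ such that $wa$ is LSP.
   Context: A finite word $u$ is a left special factor of a word $w$ if there are distinct letters $x\neq y$ such that $xu$ and $yu$ are factors of $w$. A word is LSP if every left special factor of it is a prefix of it. *)

theory Defs
  imports Main "HOL-Library.Sublist"
begin

text \<open>Finite words are lists over an arbitrary alphabet 'a. A factor is a
contiguous sublist (library notion sublist), a prefix is the library prefix.\<close>

definition left_special :: "'a list \<Rightarrow> 'a list \<Rightarrow> bool" where
  "left_special u w \<longleftrightarrow>
     (\<exists>x y. x \<noteq> y \<and> sublist (x # u) w \<and> sublist (y # u) w)"

definition LSP :: "'a list \<Rightarrow> bool" where
  "LSP w \<longleftrightarrow> (\<forall>u. left_special u w \<longrightarrow> prefix u w)"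

end

theory Submission
  imports Defs
begin

text \<open>Let \<open>v\<close> be a longest suffix of \<open>w\<close> that is left special or empty, and let \<open>a\<close> be the
letter following the prefix occurrence of \<open>v\<close> in \<open>w\<close>. A left special factor of \<open>w a\<close> that is not
already left special in \<open>w\<close> has an extension \<open>x u\<close> occurring only as a suffix, so \<open>u = v' a\<close>
with \<open>x v'\<close> a suffix of \<open>w\<close>; the other extension \<open>y v' a\<close> must then occur inside \<open>w\<close>, so \<open>v'\<close> is a
left special suffix of \<open>w\<close>, hence a suffix of \<open>v\<close>. Either \<open>v' = v\<close>, or \<open>x v' a\<close> occurs inside
\<open>v a\<close>, making \<open>v' a\<close> left special in \<open>w\<close>; in both cases \<open>v' a\<close> is a prefix of \<open>w\<close>.\<close>

lemma sublist_snoc_not_sublist: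
  assumes "sublist s (w @ [a])" and "\<not> sublist s w"
  shows "\<exists>v. s = v @ [a] \<and> suffix v w"
  using assms by (auto simp: sublist_snoc)

lemma suffix_Cons_same_tail:
  assumes "suffix (x # v) w" and "suffix (y # v) w"
  shows "x = y"
  using assms by (auto simp: suffix_def)

lemma left_special_prefix:
  assumes "LSP w" and "left_special u w"
  shows "prefix u w"
  using assms by (auto simp: LSP_def)

lemma left_special_length_less:
  assumes "left_special u w"
  shows "length u < length w"
  using assms sublist_length_le by (fastforce simp: left_special_def)

lemma LSP_snocI:
  assumes "LSP w"
    and new_extension: "\<And>x y v. x \<noteq> y \<Longrightarrow> suffix (x # v) w \<Longrightarrow> sublist (y # v @ [a]) w
      \<Longrightarrow> prefix (v @ [a]) w"
  shows "LSP (w @ [a])"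
  unfolding LSP_def
proof (intro allI impI)
  fix u
  assume "left_special u (w @ [a])"
  then obtain x y where "x \<noteq> y" "sublist (x # u) (w @ [a])" "sublist (y # u) (w @ [a])"
    by (auto simp: left_special_def)
  have new: "prefix u (w @ [a])"
    if "x \<noteq> y" "sublist (x # u) (w @ [a])" "\<not> sublist (x # u) w" "sublist (y # u) (w @ [a])"
    for x y
  proof (cases u rule: rev_cases)
    case Nil
    then show ?thesis by simp
  next
    case (snoc v b)
    with sublist_snoc_not_sublist[OF that(2,3)]
    have "b = a" and x_suffix: "suffix (x # v) w" by auto
    have "sublist (y # v @ [a]) w"
    proof (rule ccontr)
      assume "\<not> sublist (y # v @ [a]) w"
      then have "suffix (y # v) w"
        using sublist_snoc_not_sublist[of "y # v @ [a]" w a] that(4) snoc \<open>b = a\<close> by auto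
      with x_suffix \<open>x \<noteq> y\<close> show False by (auto dest: suffix_Cons_same_tail)
    qed
    with new_extension[OF \<open>x \<noteq> y\<close> x_suffix] snoc \<open>b = a\<close> show ?thesis by simp
  qed
  show "prefix u (w @ [a])"
  proof (cases "sublist (x # u) w \<and> sublist (y # u) w")
    case True
    with \<open>x \<noteq> y\<close> have "left_special u w" by (auto simp: left_special_def)
    with assms(1) show ?thesis by (auto dest: left_special_prefix)
  next
    case False
    with new[of x y] new[of y x] \<open>x \<noteq> y\<close> \<open>sublist (x # u) (w @ [a])\<close> \<open>sublist (y # u) (w @ [a])\<close>
    show ?thesis by auto
  qed
qed

lemma LSP_snoc_after_longest_left_special_suffix:
  assumes "LSP w" and "suffix v w" and "prefix (v @ [a]) w"
    and longest: "\<And>v'. suffix v' w \<Longrightarrow> left_special v' w \<Longrightarrow> length v' \<le> length v"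
  shows "LSP (w @ [a])"
proof (rule LSP_snocI[OF \<open>LSP w\<close>])
  fix x y v'
  assume "x \<noteq> y" and x_suffix: "suffix (x # v') w" and y_factor: "sublist (y # v' @ [a]) w"
  have "sublist (y # v') w"
    using y_factor by (metis append_Cons sublist_append_rightI sublist_order.dual_order.trans)
  with x_suffix \<open>x \<noteq> y\<close> have "left_special v' w"
    by (auto simp: left_special_def intro: suffix_imp_sublist)
  moreover have "suffix v' w"
    using x_suffix by (rule suffix_ConsD)
  ultimately have "suffix v' v"
    using \<open>suffix v w\<close> longest suffix_length_suffix by blast
  show "prefix (v' @ [a]) w"
  proof (cases "v' = v")
    case True
    with \<open>prefix (v @ [a]) w\<close> show ?thesis by simp
  next
    case False
    with \<open>suffix v' v\<close> obtain q where "v = q @ v'" and "q \<noteq> []"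
      by (auto simp: suffix_def)
    then obtain p z where v: "v = p @ z # v'"
      by (metis append_butlast_last_id append_Cons append_Nil append_assoc)
    then have "suffix (z # v') w"
      using \<open>suffix v w\<close> suffix_appendD by blast
    then have "z = x"
      using suffix_Cons_same_tail[OF x_suffix] by simp
    have "sublist (x # v' @ [a]) w"
      using \<open>prefix (v @ [a]) w\<close> v \<open>z = x\<close> by (auto simp: prefix_def sublist_def)
    with y_factor \<open>x \<noteq> y\<close> have "left_special (v' @ [a]) w"
      by (auto simp: left_special_def)
    with \<open>LSP w\<close> show ?thesis by (rule left_special_prefix)
  qed
qed

theorem lemma7:
  fixes w :: "'a list"
  assumes "w \<noteq> []" and "LSP w"
  shows "\<exists>a \<in> set w. LSP (w @ [a])"
proof -
  define candidate where "candidate v \<longleftrightarrow> suffix v w \<and> (v = [] \<or> left_special v w)" for v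
  have "\<forall>v. candidate v \<longrightarrow> length v < length w"
    using \<open>w \<noteq> []\<close> left_special_length_less by (auto simp: candidate_def)
  then obtain v where "candidate v" and longest: "\<And>v'. candidate v' \<Longrightarrow> length v' \<le> length v"
    using ex_has_greatest_nat[of candidate "[]" length "length w"] by (auto simp: candidate_def)
  have "prefix v w" and "length v < length w"
    using \<open>candidate v\<close> \<open>LSP w\<close> \<open>w \<noteq> []\<close> left_special_prefix left_special_length_less
    by (auto simp: candidate_def)
  then obtain a r where "w = v @ a # r"
    by (metis append_Nil2 neq_Nil_conv nat_less_le prefix_def)
  then have "a \<in> set w" and "prefix (v @ [a]) w" by auto
  moreover have "LSP (w @ [a])"
    using \<open>LSP w\<close> \<open>candidate v\<close> \<open>prefix (v @ [a]) w\<close> longest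
    by (intro LSP_snoc_after_longest_left_special_suffix) (auto simp: candidate_def)
  ultimately show ?thesis by blast
qed

end
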